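(* Let $\gamma>0$ and $\theta>0$ be fixed constants, let $\delta>0$ (the fatality rate), and let $y(0),y(1),y(2),\dots$ be a given real sequence (the measured fraction of deceased individuals). Consider the discrete-time linear time-invariant filter \[ \hat{x}(k+1)=A\,\hat{x}(k)+B\,\hat{u}(k),\qquad \hat{z}(k)=C\,\hat{x}(k)+D\,\hat{u}(k),\qquad k=0,1,2,\dots, \] with state $\hat{x}(k)\in\mathbb{R}^2$, output $\hat{z}(k)=(\hat{z}_1(k),\hat{z}_2(k))^T\in\mathbb{R}^2$, matrices \[ A=\begin{bmatrix}0&0\\1&0\end{bmatrix},\quad B=\begin{bmatrix}1\\0\end{bmatrix},\quad D=\begin{bmatrix}\gamma^{-1}\theta^{-1}\\0\end{bmatrix},\quad C=\begin{bmatrix}\theta^{-1}+\gamma^{-1}-2\theta^{-1}\gamma^{-1} & (1-\theta^{-1})(1-\gamma^{-1})\\ \theta^{-1} & 1-\theta^{-1}\end{bmatrix}, \] arbitrary initial state $\hat{x}(0)\in\mathbb{R}^2$ (which may depend on $\delta$), and input $\hat{u}(k)=1-\delta^{-1}y(k)$. Then for every $k\ge 2$ the estimate \[ \hat{R}(k)=\frac{\hat{z}_1(k)-\hat{z}_1(k+1)}{\gamma\,(\hat{z}_2(k)-\hat{z}_1(k))} \] (whenever the denominator is nonzero) is independent of the value of the fatality rate $\delta$.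
   Context: This filter arises from an SIRDC epidemic model in which $z_1=x_1$ (susceptible fraction), $z_2=x_1+x_2$ (susceptible plus infected), and $\hat R$ is the estimated effective reproduction number; $\gamma$ is the inverse infectious period, $\theta$ the inverse resolution time. *)

theory Defs
  imports "HOL-Analysis.Analysis"
begin

definition filtA :: "real^2^2" where
  "filtA = vector [vector [0, 0], vector [1, 0]]"

definition filtB :: "real^2" where
  "filtB = vector [1, 0]"

definition filtC :: "real \<Rightarrow> real \<Rightarrow> real^2^2" where
  "filtC \<gamma> \<theta> = vector
     [vector [1/\<theta> + 1/\<gamma> - 2 * (1/\<theta>) * (1/\<gamma>), (1 - 1/\<theta>) * (1 - 1/\<gamma>)],
      vector [1/\<theta>, 1 - 1/\<theta>]]"

definition filtD :: "real \<Rightarrow> real \<Rightarrow> real^2" where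
  "filtD \<gamma> \<theta> = vector [(1/\<gamma>) * (1/\<theta>), 0]"

definition filt_input :: "real \<Rightarrow> (nat \<Rightarrow> real) \<Rightarrow> nat \<Rightarrow> real" where
  "filt_input \<delta> y k = 1 - y k / \<delta>"

primrec filt_state :: "real \<Rightarrow> (nat \<Rightarrow> real) \<Rightarrow> real^2 \<Rightarrow> nat \<Rightarrow> real^2" where
  "filt_state \<delta> y x0 0 = x0"
| "filt_state \<delta> y x0 (Suc k) = filtA *v filt_state \<delta> y x0 k + filt_input \<delta> y k *\<^sub>R filtB"

definition filt_out :: "real \<Rightarrow> real \<Rightarrow> real \<Rightarrow> (nat \<Rightarrow> real) \<Rightarrow> real^2 \<Rightarrow> nat \<Rightarrow> real^2" where
  "filt_out \<gamma> \<theta> \<delta> y x0 k = filtC \<gamma> \<theta> *v filt_state \<delta> y x0 k + filt_input \<delta> y k *\<^sub>R filtD \<gamma> \<theta>"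

definition R_hat :: "real \<Rightarrow> real \<Rightarrow> real \<Rightarrow> (nat \<Rightarrow> real) \<Rightarrow> real^2 \<Rightarrow> nat \<Rightarrow> real" where
  "R_hat \<gamma> \<theta> \<delta> y x0 k =
     (filt_out \<gamma> \<theta> \<delta> y x0 k $ 1 - filt_out \<gamma> \<theta> \<delta> y x0 (k+1) $ 1) /
     (\<gamma> * (filt_out \<gamma> \<theta> \<delta> y x0 k $ 2 - filt_out \<gamma> \<theta> \<delta> y x0 k $ 1))"

end

theory Submission
  imports Defs
begin

text \<open>Since A is nilpotent of order two, the state after two steps is the pair of the last two
  inputs, whatever the initial state. Each row of [C D] sums to 1, so the output is 1 minus a
  fixed weighted average of the last three measurements, divided by \<delta>. Both the numerator
  and the denominator of R_hat are differences of such outputs, hence scale by 1/\<delta>, and the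
  fatality rate cancels.\<close>

lemma filt_state_Suc_Suc:
  "filt_state \<delta> y x0 (Suc (Suc m)) = vector [filt_input \<delta> y (Suc m), filt_input \<delta> y m]"
  by (simp add: vec_eq_iff forall_2 matrix_vector_mult_def sum_2 filtA_def filtB_def)

lemma filt_row_sum:
  fixes i :: 2
  shows "filtC \<gamma> \<theta> $ i $ 1 + filtC \<gamma> \<theta> $ i $ 2 + filtD \<gamma> \<theta> $ i = 1"
  using exhaust_2 [of i] by (auto simp: filtC_def filtD_def algebra_simps)

definition filt_deaths_avg :: "real \<Rightarrow> real \<Rightarrow> (nat \<Rightarrow> real) \<Rightarrow> nat \<Rightarrow> 2 \<Rightarrow> real" where
  "filt_deaths_avg \<gamma> \<theta> y m i =
     filtC \<gamma> \<theta> $ i $ 1 * y (Suc m) + filtC \<gamma> \<theta> $ i $ 2 * y m + filtD \<gamma> \<theta> $ i * y (Suc (Suc m))"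

lemma filt_out_Suc_Suc:
  "filt_out \<gamma> \<theta> \<delta> y x0 (Suc (Suc m)) $ i = 1 - filt_deaths_avg \<gamma> \<theta> y m i / \<delta>"
proof -
  have "filt_out \<gamma> \<theta> \<delta> y x0 (Suc (Suc m)) $ i =
      filtC \<gamma> \<theta> $ i $ 1 * (1 - y (Suc m) / \<delta>) + filtC \<gamma> \<theta> $ i $ 2 * (1 - y m / \<delta>)
      + filtD \<gamma> \<theta> $ i * (1 - y (Suc (Suc m)) / \<delta>)"
    unfolding filt_out_def filt_state_Suc_Suc
    by (simp add: filt_input_def matrix_vector_mult_def sum_2)
  also have "\<dots> = (filtC \<gamma> \<theta> $ i $ 1 + filtC \<gamma> \<theta> $ i $ 2 + filtD \<gamma> \<theta> $ i)
      - filt_deaths_avg \<gamma> \<theta> y m i / \<delta>"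
    by (simp add: filt_deaths_avg_def algebra_simps add_divide_distrib)
  finally show ?thesis
    by (simp only: filt_row_sum)
qed

lemma R_hat_Suc_Suc:
  assumes "\<delta> \<noteq> 0"
  shows "R_hat \<gamma> \<theta> \<delta> y x0 (Suc (Suc m)) =
    (filt_deaths_avg \<gamma> \<theta> y (Suc m) 1 - filt_deaths_avg \<gamma> \<theta> y m 1) /
    (\<gamma> * (filt_deaths_avg \<gamma> \<theta> y m 1 - filt_deaths_avg \<gamma> \<theta> y m 2))"
proof -
  have "R_hat \<gamma> \<theta> \<delta> y x0 (Suc (Suc m)) =
    ((filt_deaths_avg \<gamma> \<theta> y (Suc m) 1 - filt_deaths_avg \<gamma> \<theta> y m 1) / \<delta>) /
    (\<gamma> * ((filt_deaths_avg \<gamma> \<theta> y m 1 - filt_deaths_avg \<gamma> \<theta> y m 2) / \<delta>))"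
    by (simp add: R_hat_def filt_out_Suc_Suc diff_divide_distrib)
  then show ?thesis
    using assms by (simp add: divide_simps)
qed

theorem proposition1:
  fixes \<gamma> \<theta> \<delta>1 \<delta>2 :: real and y :: "nat \<Rightarrow> real" and x01 x02 :: "real^2" and k :: nat
  assumes "\<gamma> > 0" and "\<theta> > 0" and "\<delta>1 > 0" and "\<delta>2 > 0" and "k \<ge> 2"
    and "filt_out \<gamma> \<theta> \<delta>1 y x01 k $ 2 - filt_out \<gamma> \<theta> \<delta>1 y x01 k $ 1 \<noteq> 0"
    and "filt_out \<gamma> \<theta> \<delta>2 y x02 k $ 2 - filt_out \<gamma> \<theta> \<delta>2 y x02 k $ 1 \<noteq> 0"
  shows "R_hat \<gamma> \<theta> \<delta>1 y x01 k = R_hat \<gamma> \<theta> \<delta>2 y x02 k"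
proof -
  obtain m where "k = Suc (Suc m)"
    using \<open>k \<ge> 2\<close> by (metis add_2_eq_Suc le_Suc_ex)
  then show ?thesis
    using \<open>\<delta>1 > 0\<close> \<open>\<delta>2 > 0\<close> by (simp add: R_hat_Suc_Suc)
qed

end
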